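(* Let $n\ge3$, $C_0\in\mathbb R$, and let $u\in C^2(\mathbb R^n\setminus\overline{B_1})$ be a radially symmetric solution of $$\frac1n\sum_{i=1}^n\ln\lambda_i(D^2u)=C_0\quad\text{in }|x|>1$$ (so all eigenvalues $\lambda_i(D^2u)$ are positive). Put $C'=e^{nC_0}$. Then there exist constants $c\ge -C'$ and $c_0'\in\mathbb R$ such that $$u(x)=\int_1^{|x|}t\,(ct^{-n}+C')^{\frac1n}\,dt+c_0'\qquad\text{for all }|x|>1.$$ Moreover $u$ is analytic at infinity: there is a constant $c_0\in\mathbb R$ such that $$u(x)=\frac12C'^{\frac1n}|x|^2+c_0+C'^{\frac1n}|x|^2\sum_{j=1}^{+\infty}\frac{\frac1n(\frac1n-1)\cdots(\frac1n-j+1)}{(2-nj)\,j!}\Big(\frac{c|x|^{-n}}{C'}\Big)^j$$ for $|x|>\max\{1,(|c|/C')^{1/n}\}$.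
   Context: $B_1$ is the open unit ball centered at the origin of $\mathbb R^n$; $\lambda_i(D^2u)$ are the eigenvalues of the Hessian of $u$. *)

theory Defs
  imports "HOL-Analysis.Analysis" "HOL-Computational_Algebra.Polynomial"
begin

definition partial :: "'n::finite \<Rightarrow> (real^'n \<Rightarrow> real) \<Rightarrow> real^'n \<Rightarrow> real" where
  "partial i f x = frechet_derivative f (at x) (axis i 1)"

definition C2_on :: "(real^'n::finite) set \<Rightarrow> (real^'n \<Rightarrow> real) \<Rightarrow> bool" where
  "C2_on S f \<longleftrightarrow>
     (\<forall>x\<in>S. f differentiable (at x)) \<and>
     (\<forall>i. \<forall>x\<in>S. partial i f differentiable (at x)) \<and>
     (\<forall>i. continuous_on S (partial i f)) \<and>
     (\<forall>i j. continuous_on S (partial j (partial i f)))"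

definition hessian :: "(real^'n::finite \<Rightarrow> real) \<Rightarrow> real^'n \<Rightarrow> real^'n^'n" where
  "hessian f x = (\<chi> i j. partial j (partial i f) x)"

definition charpoly :: "real^'n::finite^'n \<Rightarrow> real poly" where
  "charpoly A = det (\<chi> i j. (if i = j then [:0, 1:] else 0) - [:A $ i $ j:])"

definition eigenvalues_mult :: "real^'n::finite^'n \<Rightarrow> ('n \<Rightarrow> real) \<Rightarrow> bool" where
  "eigenvalues_mult A lam \<longleftrightarrow> charpoly A = (\<Prod>i\<in>UNIV. [:- lam i, 1:])"

definition radial :: "(real^'n::finite \<Rightarrow> real) \<Rightarrow> bool" where
  "radial f \<longleftrightarrow> (\<forall>x y. norm x > 1 \<longrightarrow> norm x = norm y \<longrightarrow> f x = f y)"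

end

theory Submission
  imports Defs
begin

(* For radial u(x) = f(|x|) the Hessian at r e_k is diagonal with entries f''(r) and, n - 1 times,
   f'(r)/r, so the equation reads f'' (f'/r)^(n-1) = C', i.e. (f'^n)' = (C' r^n)'. Hence
   f'(r)^n = C' r^n + c, which integrates to the first formula; c >= -C' because f' > 0, the
   off-axis eigenvalues being positive. Writing f'(r) = C'^(1/n) r (1 + z)^(1/n) with z = c r^-n / C',
   the binomial series yields the primitive C'^(1/n) r^2 Phi(z), where
   Phi(z) = sum_k (1/n choose k) z^k / (2 - n k) satisfies 2 Phi - n z Phi' = (1 + z)^(1/n). *)

lemma same_derivative_imp_diff_const:
  fixes f g :: "real \<Rightarrow> real"
  assumes "\<And>x. x > a \<Longrightarrow> (f has_real_derivative h x) (at x)"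
    and "\<And>x. x > a \<Longrightarrow> (g has_real_derivative h x) (at x)"
  obtains K where "\<And>x. x > a \<Longrightarrow> f x = g x + K"
proof -
  have "\<exists>K. \<forall>x\<in>{a<..}. f x - g x = K"
  proof (rule has_field_derivative_zero_constant)
    fix x assume "x \<in> {a<..}"
    then have "((\<lambda>x. f x - g x) has_real_derivative h x - h x) (at x)"
      using assms by (auto intro!: derivative_eq_intros)
    then show "((\<lambda>x. f x - g x) has_real_derivative 0) (at x within {a<..})"
      by (simp add: has_field_derivative_at_within)
  qed simp
  then show ?thesis using that by (force simp: algebra_simps)
qed

lemma primitive_eq_integral_plus_const:
  fixes f h :: "real \<Rightarrow> real"
  assumes h: "continuous_on {a..} h"
    and f: "\<And>x. x > a \<Longrightarrow> (f has_real_derivative h x) (at x)"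
  obtains K where "\<And>x. x > a \<Longrightarrow> f x = integral {a..x} h + K"
proof -
  have "((\<lambda>y. integral {a..y} h) has_real_derivative h x) (at x)" if x: "x > a" for x
  proof -
    have "((\<lambda>y. integral {a..y} h) has_real_derivative h x) (at x within {a..x + 1})"
      by (rule integral_has_real_derivative) (use x in \<open>auto intro: continuous_on_subset[OF h]\<close>)
    moreover have "at x within {a..x + 1} = at x"
      by (rule at_within_interior) (use x in auto)
    ultimately show ?thesis by simp
  qed
  then obtain K where "\<And>x. x > a \<Longrightarrow> f x = integral {a..x} h + K"
    using same_derivative_imp_diff_const[OF f] by blast
  then show ?thesis by (rule that)
qed

lemma has_real_derivative_along_ray:
  fixes u :: "'a::real_normed_vector \<Rightarrow> real"
  assumes "u differentiable (at (r *\<^sub>R e))"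
  shows "((\<lambda>s. u (s *\<^sub>R e)) has_real_derivative frechet_derivative u (at (r *\<^sub>R e)) e) (at r)"
proof -
  let ?D = "frechet_derivative u (at (r *\<^sub>R e))"
  have D: "(u has_derivative ?D) (at (r *\<^sub>R e))"
    using assms frechet_derivative_works by blast
  have "((\<lambda>s. s *\<^sub>R e) has_derivative (\<lambda>h. h *\<^sub>R e)) (at r)"
    by (auto intro!: derivative_eq_intros)
  from has_derivative_compose[OF this D]
  have "((\<lambda>s. u (s *\<^sub>R e)) has_derivative (\<lambda>h. ?D (h *\<^sub>R e))) (at r)"
    by (simp add: o_def)
  moreover have "?D (h *\<^sub>R e) = ?D e * h" for h
    using linear_scale[OF has_derivative_linear[OF D]] by simp
  ultimately show ?thesis by (simp add: has_field_derivative_def mult_commute_abs)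
qed

lemma radial_C2_profile:
  fixes u :: "real^'n \<Rightarrow> real"
  assumes C2: "C2_on {x. norm x > 1} u" and rad: "radial u"
  obtains f g g2 :: "real \<Rightarrow> real"
  where "\<And>x. norm x > 1 \<Longrightarrow> u x = f (norm x)"
    and "\<And>r. r > 1 \<Longrightarrow> (f has_real_derivative g r) (at r)"
    and "\<And>r. r > 1 \<Longrightarrow> (g has_real_derivative g2 r) (at r)"
proof -
  fix k :: 'n
  let ?e = "axis k 1 :: real^'n"
  have du: "u differentiable (at x)" and dpu: "partial k u differentiable (at x)"
    if "norm x > 1" for x
    using C2 that unfolding C2_on_def by auto
  have "u x = u (norm x *\<^sub>R ?e)" if "norm x > 1" for x
    using rad[unfolded radial_def, rule_format, of x "norm x *\<^sub>R ?e"] that by simp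
  moreover have "((\<lambda>r. u (r *\<^sub>R ?e)) has_real_derivative partial k u (r *\<^sub>R ?e)) (at r)"
    if "r > 1" for r
    using has_real_derivative_along_ray[OF du] that unfolding partial_def by simp
  moreover have "((\<lambda>r. partial k u (r *\<^sub>R ?e)) has_real_derivative
      partial k (partial k u) (r *\<^sub>R ?e)) (at r)" if "r > 1" for r
    using has_real_derivative_along_ray[OF dpu] that unfolding partial_def[of k "partial k u"] by simp
  ultimately show ?thesis by (rule that)
qed

lemma open_norm_gt: "open {x::'a::real_normed_vector. norm x > r}"
  by (intro open_Collect_less continuous_intros)

lemma has_derivative_radial:
  fixes u :: "'a::real_inner \<Rightarrow> real"
  assumes u: "\<And>x. norm x > 1 \<Longrightarrow> u x = f (norm x)"
    and f: "(f has_real_derivative d) (at (norm y))" and y: "norm y > 1"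
  shows "(u has_derivative (\<lambda>h. d * (h \<bullet> sgn y))) (at y)"
proof -
  have "y \<noteq> 0" using y by auto
  then have "((\<lambda>x. f (norm x)) has_derivative (\<lambda>h. d * (h \<bullet> sgn y))) (at y)"
    using has_derivative_compose[OF has_derivative_norm f[unfolded has_field_derivative_def]]
    by (simp add: o_def mult.commute)
  then show ?thesis
    by (rule has_derivative_transform_within_open[OF _ open_norm_gt]) (use u y in auto)
qed

lemma partial_radial:
  fixes u :: "real^'n \<Rightarrow> real"
  assumes u: "\<And>x. norm x > 1 \<Longrightarrow> u x = f (norm x)"
    and f: "\<And>r. r > 1 \<Longrightarrow> (f has_real_derivative g r) (at r)" and y: "norm y > 1"
  shows "partial i u y = g (norm y) * y $ i / norm y"
proof -
  have "(u has_derivative (\<lambda>h. g (norm y) * (h \<bullet> sgn y))) (at y)"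
    by (rule has_derivative_radial[OF u f[OF y] y])
  then have "frechet_derivative u (at y) = (\<lambda>h. g (norm y) * (h \<bullet> sgn y))"
    by (rule frechet_derivative_at[symmetric])
  then show ?thesis
    by (simp add: partial_def sgn_div_norm inner_axis' divide_inverse)
qed

lemma hessian_radial_axis:
  fixes u :: "real^'n \<Rightarrow> real"
  assumes u: "\<And>x. norm x > 1 \<Longrightarrow> u x = f (norm x)"
    and f: "\<And>r. r > 1 \<Longrightarrow> (f has_real_derivative g r) (at r)"
    and g: "\<And>r. r > 1 \<Longrightarrow> (g has_real_derivative g2 r) (at r)"
    and r: "r > 1"
  shows "hessian u (r *\<^sub>R axis k 1) = (\<chi> i j. if i = j then (if i = k then g2 r else g r / r) else 0)"
proof -
  let ?e = "axis k 1 :: real^'n"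
  let ?y = "r *\<^sub>R ?e"
  have ny: "norm ?y = r" and sy: "sgn ?y = ?e" and y0: "?y \<noteq> 0"
    using r by (auto simp: sgn_scaleR sgn_div_norm)
  have G: "((\<lambda>y. g (norm y)) has_derivative (\<lambda>h. g2 r * (h \<bullet> ?e))) (at ?y)"
    using has_derivative_radial[where u="\<lambda>y. g (norm y)" and f=g and d="g2 r" and y="?y"] g[OF r] r ny sy
    by simp
  let ?D = "\<lambda>i h. g2 r * (h \<bullet> ?e) * ?y $ i / r + g r * (h $ i / r - ?y $ i * (h \<bullet> ?e) / r\<^sup>2)"
  have "((\<lambda>y. g (norm y) * y $ i / norm y) has_derivative ?D i) (at ?y)" for i
    using y0 G ny sy
    by (auto intro!: derivative_eq_intros has_derivative_norm
        bounded_linear_imp_has_derivative[OF bounded_linear_vec_nth] simp: field_simps power2_eq_square)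
  then have P: "(partial i u has_derivative ?D i) (at ?y)" for i
    by (rule has_derivative_transform_within_open[OF _ open_norm_gt])
      (use r in \<open>auto simp: partial_radial[OF u f]\<close>)
  have "partial j (partial i u) ?y = ?D i (axis j 1)" for i j
    unfolding partial_def[of j] by (simp only: frechet_derivative_at[OF P[of i], symmetric])
  moreover have "axis j 1 $ i = (if i = j then 1 else (0::real))" for i j :: 'n
    by (simp add: axis_def)
  ultimately show ?thesis
    using r by (auto simp: hessian_def vec_eq_iff inner_axis_axis power2_eq_square)
qed

lemma charpoly_diagonal:
  "charpoly (\<chi> i j. if i = j then d i else 0) = (\<Prod>i\<in>UNIV. [:- d i, 1:])"
proof -
  have "charpoly (\<chi> i j. if i = j then d i else 0) = det (\<chi> i j. if i = j then [:- d i, 1:] else 0)"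
    unfolding charpoly_def by (rule arg_cong[where f = det]) (auto simp: vec_eq_iff)
  also have "\<dots> = (\<Prod>i\<in>UNIV. [:- d i, 1:])"
    by (subst det_diagonal) auto
  finally show ?thesis .
qed

lemma eigenvalues_mult_diagonal:
  fixes d lam :: "'n::finite \<Rightarrow> real"
  assumes "eigenvalues_mult (\<chi> i j. if i = j then d i else 0) lam"
  shows "prod d UNIV = prod lam UNIV" and "d i \<in> range lam"
proof -
  have "(\<Prod>j\<in>UNIV. [:- d j, 1:]) = (\<Prod>j\<in>UNIV. [:- lam j, 1:])"
    using assms unfolding eigenvalues_mult_def charpoly_diagonal .
  from arg_cong[OF this, of "\<lambda>p. poly p x" for x]
  have roots: "(\<Prod>j\<in>UNIV. x - d j) = (\<Prod>j\<in>UNIV. x - lam j)" for x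
    by (simp add: poly_prod)
  show "prod d UNIV = prod lam UNIV"
    using roots[of 0] by (simp add: prod_uminus)
  have "(\<Prod>j\<in>UNIV. d i - d j) = 0"
    by (rule prod_zero) auto
  then have "(\<Prod>j\<in>UNIV. d i - lam j) = 0"
    using roots[of "d i"] by simp
  then show "d i \<in> range lam" by auto
qed

lemma radial_hessian_eq_ode:
  fixes u :: "real^'n \<Rightarrow> real"
  assumes n: "CARD('n) \<ge> 2"
    and u: "\<And>x. norm x > 1 \<Longrightarrow> u x = f (norm x)"
    and f: "\<And>r. r > 1 \<Longrightarrow> (f has_real_derivative g r) (at r)"
    and g: "\<And>r. r > 1 \<Longrightarrow> (g has_real_derivative g2 r) (at r)"
    and eq: "\<forall>x. norm x > 1 \<longrightarrow> (\<exists>lam. eigenvalues_mult (hessian u x) lam \<and> (\<forall>i. lam i > 0) \<and>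
               (1 / real CARD('n)) * (\<Sum>i\<in>UNIV. ln (lam i)) = C0)"
    and r: "r > 1"
  shows "g2 r * (g r / r) ^ (CARD('n) - 1) = exp (real CARD('n) * C0)" and "g r > 0"
proof -
  fix k :: 'n
  obtain lam where lam: "eigenvalues_mult (hessian u (r *\<^sub>R axis k 1)) lam" "\<forall>i. lam i > 0"
    "(1 / real CARD('n)) * (\<Sum>i\<in>UNIV. ln (lam i)) = C0"
    using eq[rule_format, of "r *\<^sub>R axis k 1"] r by auto
  have "hessian u (r *\<^sub>R axis k 1) = (\<chi> i j. if i = j then (if i = k then g2 r else g r / r) else 0)"
    by (rule hessian_radial_axis[OF u f g r])
  note diag = eigenvalues_mult_diagonal[OF lam(1)[unfolded this]]
  have "g2 r * (g r / r) ^ (CARD('n) - 1) = prod lam UNIV"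
    using diag(1) by (simp add: prod_gen_delta)
  also have "\<dots> = exp (\<Sum>i\<in>UNIV. ln (lam i))"
    using lam(2) by (simp add: exp_sum)
  also have "(\<Sum>i\<in>UNIV. ln (lam i)) = real CARD('n) * C0"
    using lam(3) by (simp add: field_simps)
  finally show "g2 r * (g r / r) ^ (CARD('n) - 1) = exp (real CARD('n) * C0)" .
  have "card (UNIV - {k}) > 0"
    using n by (simp add: card_Diff_singleton)
  then obtain j where "j \<in> UNIV - {k}"
    by (metis card_gt_0_iff ex_in_conv)
  then have "g r / r > 0"
    using diag(2)[of j] lam(2) by auto
  then show "g r > 0"
    using r by (simp add: zero_less_divide_iff)
qed

lemma radial_ode_solution:
  fixes g g2 :: "real \<Rightarrow> real" and N :: nat
  assumes N: "N \<ge> 1" and C': "C' > 0"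
    and g: "\<And>r. r > 1 \<Longrightarrow> (g has_real_derivative g2 r) (at r)"
    and pos: "\<And>r. r > 1 \<Longrightarrow> g r > 0"
    and ode: "\<And>r. r > 1 \<Longrightarrow> g2 r * (g r / r) ^ (N - 1) = C'"
  obtains c where "c \<ge> - C'"
    and "\<And>r. r > 1 \<Longrightarrow> g r = r * (c * r powr - real N + C') powr (1 / real N)"
proof -
  have gN: "((\<lambda>r. g r ^ N) has_real_derivative real N * (C' * r ^ (N - 1))) (at r)" if r: "r > 1" for r
  proof -
    have "g2 r * g r ^ (N - 1) = C' * r ^ (N - 1)"
      using ode[OF r] r by (simp add: power_divide field_simps)
    with g[OF r] show ?thesis
      by (auto intro!: derivative_eq_intros simp: algebra_simps)
  qed
  have rN: "((\<lambda>r. C' * r ^ N) has_real_derivative real N * (C' * r ^ (N - 1))) (at r)" if "r > 1" for r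
    by (auto intro!: derivative_eq_intros)
  obtain c where c: "\<And>r. r > 1 \<Longrightarrow> g r ^ N = C' * r ^ N + c"
    using same_derivative_imp_diff_const[OF gN rN] by blast
  have "c \<ge> - C'"
  proof (rule ccontr)
    assume "\<not> c \<ge> - C'"
    then have q: "- c / C' > 1" using C' by (simp add: field_simps)
    define r0 where "r0 = root N (- c / C')"
    have r0: "r0 > 1" and "r0 ^ N = - c / C'"
      unfolding r0_def using q N by auto
    then have "g r0 ^ N = 0" using c[OF r0] C' by simp
    then show False using pos[OF r0] by simp
  qed
  moreover have "g r = r * (c * r powr - real N + C') powr (1 / real N)" if r: "r > 1" for r
  proof -
    have "c * r powr - real N + C' = (g r / r) ^ N"
      using c[OF r] r by (simp add: powr_minus powr_realpow power_divide field_simps)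
    also have "\<dots> = (g r / r) powr real N"
      using pos[OF r] r by (simp add: powr_realpow)
    finally show ?thesis
      using pos[OF r] r N by (simp add: powr_powr)
  qed
  ultimately show ?thesis by (rule that)
qed

lemma radial_solution_profile:
  fixes u :: "real^'n \<Rightarrow> real"
  assumes n: "CARD('n) \<ge> 2"
    and C2: "C2_on {x. norm x > 1} u" and rad: "radial u"
    and eq: "\<forall>x. norm x > 1 \<longrightarrow> (\<exists>lam. eigenvalues_mult (hessian u x) lam \<and> (\<forall>i. lam i > 0) \<and>
               (1 / real CARD('n)) * (\<Sum>i\<in>UNIV. ln (lam i)) = C0)"
  obtains c f where "c \<ge> - exp (real CARD('n) * C0)"
    and "\<And>x. norm x > 1 \<Longrightarrow> u x = f (norm x)"
    and "\<And>r. r > 1 \<Longrightarrow> (f has_real_derivative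
           r * (c * r powr - real CARD('n) + exp (real CARD('n) * C0)) powr (1 / real CARD('n))) (at r)"
proof -
  obtain f g g2 :: "real \<Rightarrow> real"
    where u: "\<And>x. norm x > 1 \<Longrightarrow> u x = f (norm x)"
      and f: "\<And>r. r > 1 \<Longrightarrow> (f has_real_derivative g r) (at r)"
      and g: "\<And>r. r > 1 \<Longrightarrow> (g has_real_derivative g2 r) (at r)"
    using radial_C2_profile[OF C2 rad] by blast
  note ode = radial_hessian_eq_ode[OF n u f g eq]
  have "CARD('n) \<ge> 1" by simp
  then obtain c where c: "c \<ge> - exp (real CARD('n) * C0)"
    and g_eq: "\<And>r. r > 1 \<Longrightarrow> g r = r * (c * r powr - real CARD('n) + exp (real CARD('n) * C0)) powr (1 / real CARD('n))"
    using radial_ode_solution[OF _ exp_gt_zero g ode(2) ode(1)] by blast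
  show ?thesis
    by (rule that[OF c u]) (use f g_eq in auto)
qed

lemma profile_integral_form:
  fixes f :: "real \<Rightarrow> real"
  assumes n: "n > 0" and C': "C' \<ge> 0" and c: "c \<ge> - C'"
    and f: "\<And>r. r > 1 \<Longrightarrow> (f has_real_derivative r * (c * r powr - n + C') powr (1 / n)) (at r)"
  obtains c0' where "\<And>R. R > 1 \<Longrightarrow> f R = integral {1..R} (\<lambda>t. t * (c * t powr - n + C') powr (1 / n)) + c0'"
proof -
  have "c * t powr - n + C' \<ge> 0" if t: "t \<ge> 1" for t
  proof (cases "c \<ge> 0")
    case False
    have "t powr - n \<le> 1"
      using t n by (simp add: powr_minus ge_one_powr_ge_zero inverse_le_1_iff)
    then have "c * t powr - n \<ge> c"
      using False by (simp add: mult_le_cancel_left1)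
    then show ?thesis using c by simp
  qed (use C' in simp)
  then have "continuous_on {1..} (\<lambda>t. t * (c * t powr - n + C') powr (1 / n))"
    using n by (intro continuous_intros continuous_on_powr') auto
  then show ?thesis
    using primitive_eq_integral_plus_const[OF _ f] that by blast
qed

definition binomial_primitive_coeff :: "real \<Rightarrow> real \<Rightarrow> nat \<Rightarrow> real" where
  "binomial_primitive_coeff n a k = (a gchoose k) / (2 - n * real k)"

definition binomial_primitive_series :: "real \<Rightarrow> real \<Rightarrow> real \<Rightarrow> real" where
  "binomial_primitive_series n a z = (\<Sum>k. binomial_primitive_coeff n a k * z ^ k)"

lemma abs_two_minus_mult_ge_1:
  fixes n :: real
  assumes "n \<ge> 3"
  shows "\<bar>2 - n * real k\<bar> \<ge> 1"
proof (cases k)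
  case (Suc m)
  then have "n * real k \<ge> 3 * 1" using assms by (intro mult_mono) auto
  then show ?thesis by simp
qed simp

lemma summable_abs_gbinomial_series:
  fixes z :: real
  assumes "\<bar>z\<bar> < 1"
  shows "summable (\<lambda>k. \<bar>(a gchoose k) * z ^ k\<bar>)"
proof -
  define K where "K = (1 + \<bar>z\<bar>) / 2"
  have "summable (\<lambda>k. (a gchoose k) * K ^ k)"
    using gen_binomial_real[of K a] assms by (auto simp: K_def sums_summable)
  then show ?thesis
    using powser_insidea[of _ K z] assms by (simp add: K_def)
qed

lemma summable_binomial_primitive:
  assumes "n \<ge> 3" "\<bar>z\<bar> < 1"
  shows "summable (\<lambda>k. binomial_primitive_coeff n a k * z ^ k)"
proof (rule summable_comparison_test'[OF summable_abs_gbinomial_series[OF assms(2)]])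
  fix k
  have "\<bar>binomial_primitive_coeff n a k * z ^ k\<bar> = \<bar>(a gchoose k) * z ^ k\<bar> / \<bar>2 - n * real k\<bar>"
    by (simp add: binomial_primitive_coeff_def abs_mult)
  also have "\<dots> \<le> \<bar>(a gchoose k) * z ^ k\<bar>"
    using abs_two_minus_mult_ge_1[OF assms(1), of k] by (simp add: divide_le_eq mult_le_cancel_left1)
  finally show "norm (binomial_primitive_coeff n a k * z ^ k) \<le> \<bar>(a gchoose k) * z ^ k\<bar>" by simp
qed

lemma binomial_primitive_series_ode:
  assumes n: "n \<ge> 3" and z: "\<bar>z\<bar> < 1"
  obtains D where "(binomial_primitive_series n a has_real_derivative D) (at z)"
    and "2 * binomial_primitive_series n a z - n * z * D = (1 + z) powr a"
proof
  let ?c = "binomial_primitive_coeff n a"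
  define D where "D = (\<Sum>k. diffs ?c k * z ^ k)"
  have sm: "summable (\<lambda>k. ?c k * y ^ k)" if "norm y < 1" for y
    using summable_binomial_primitive[OF n] that by simp
  show "(binomial_primitive_series n a has_real_derivative D) (at z)"
    unfolding D_def binomial_primitive_series_def[abs_def]
    by (rule termdiffs_strong'[of 1]) (use sm z in auto)
  have "(\<lambda>k. z * (diffs ?c k * z ^ k)) sums (z * D)"
    unfolding D_def by (intro sums_mult summable_sums termdiff_converges[of z 1]) (use sm z in auto)
  then have "(\<lambda>k. real k * ?c k * z ^ k) sums (z * D)"
    using sums_Suc_iff[of "\<lambda>k. real k * ?c k * z ^ k"] by (simp add: diffs_def mult_ac)
  moreover have "(\<lambda>k. ?c k * z ^ k) sums binomial_primitive_series n a z"
    unfolding binomial_primitive_series_def using sm z by (simp add: summable_sums)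
  ultimately have "(\<lambda>k. 2 * (?c k * z ^ k) - n * (real k * ?c k * z ^ k))
      sums (2 * binomial_primitive_series n a z - n * (z * D))"
    by (intro sums_diff sums_mult)
  also have "(\<lambda>k. 2 * (?c k * z ^ k) - n * (real k * ?c k * z ^ k)) = (\<lambda>k. (a gchoose k) * z ^ k)"
  proof
    fix k
    have "2 - n * real k \<noteq> 0" using abs_two_minus_mult_ge_1[OF n, of k] by auto
    then have "(2 - n * real k) * ?c k = a gchoose k" by (simp add: binomial_primitive_coeff_def)
    moreover have "2 * (?c k * z ^ k) - n * (real k * ?c k * z ^ k) = (2 - n * real k) * ?c k * z ^ k"
      by (simp add: algebra_simps)
    ultimately show "2 * (?c k * z ^ k) - n * (real k * ?c k * z ^ k) = (a gchoose k) * z ^ k"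
      by simp
  qed
  finally show "2 * binomial_primitive_series n a z - n * z * D = (1 + z) powr a"
    using sums_unique2[OF _ gen_binomial_real[OF z]] by (simp add: mult.assoc)
qed

lemma has_real_derivative_binomial_primitive:
  assumes n: "n \<ge> 3" and R: "R > 0" and small: "\<bar>b * R powr - n\<bar> < 1"
  shows "((\<lambda>R. R\<^sup>2 * binomial_primitive_series n a (b * R powr - n))
          has_real_derivative R * (1 + b * R powr - n) powr a) (at R)"
proof -
  let ?\<Phi> = "binomial_primitive_series n a" and ?z = "b * R powr - n"
  obtain D where D: "(?\<Phi> has_real_derivative D) (at ?z)"
    and ode: "2 * ?\<Phi> ?z - n * ?z * D = (1 + ?z) powr a"
    using binomial_primitive_series_ode[OF n small] .
  have "((\<lambda>R. R\<^sup>2 * ?\<Phi> (b * R powr - n)) has_real_derivative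
          2 * R * ?\<Phi> ?z + R\<^sup>2 * (D * (b * (- n * R powr (- n - 1))))) (at R)"
    using R by (auto intro!: derivative_eq_intros DERIV_chain2[where g="\<lambda>R. b * R powr - n", OF D])
  also have "2 * R * ?\<Phi> ?z + R\<^sup>2 * (D * (b * (- n * R powr (- n - 1)))) = R * (2 * ?\<Phi> ?z - n * ?z * D)"
    using R by (simp add: powr_diff field_simps power2_eq_square)
  finally show ?thesis unfolding ode .
qed

lemma binomial_primitive_series_split_head:
  assumes "n \<ge> 3" "\<bar>z\<bar> < 1"
  shows "summable (\<lambda>j. binomial_primitive_coeff n a (j + 1) * z ^ (j + 1))"
    and "binomial_primitive_series n a z = 1 / 2 + (\<Sum>j. binomial_primitive_coeff n a (j + 1) * z ^ (j + 1))"
proof -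
  have s: "summable (\<lambda>k. binomial_primitive_coeff n a k * z ^ k)"
    by (rule summable_binomial_primitive[OF assms])
  then show "summable (\<lambda>j. binomial_primitive_coeff n a (j + 1) * z ^ (j + 1))"
    by (rule summable_ignore_initial_segment)
  have "binomial_primitive_coeff n a 0 = 1 / 2"
    by (simp add: binomial_primitive_coeff_def)
  then show "binomial_primitive_series n a z = 1 / 2 + (\<Sum>j. binomial_primitive_coeff n a (j + 1) * z ^ (j + 1))"
    using suminf_split_head[OF s] by (simp add: binomial_primitive_series_def)
qed

lemma abs_mult_powr_neg_less_1:
  fixes c C' n R :: real
  assumes n: "n > 0" and C': "C' > 0" and R: "R > max 1 ((\<bar>c\<bar> / C') powr (1 / n))"
  shows "\<bar>c * R powr - n / C'\<bar> < 1"
proof -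
  have "\<bar>c\<bar> / C' = ((\<bar>c\<bar> / C') powr (1 / n)) powr n"
    using n C' by (simp add: powr_powr)
  also have "\<dots> < R powr n"
    using R n by (intro powr_less_mono2) auto
  finally show ?thesis
    using R C' by (simp add: abs_mult powr_minus divide_simps mult.commute)
qed

lemma profile_series_form:
  fixes f :: "real \<Rightarrow> real"
  assumes n: "n \<ge> 3" and C': "C' > 0"
    and f: "\<And>r. r > 1 \<Longrightarrow> (f has_real_derivative r * (c * r powr - n + C') powr (1 / n)) (at r)"
  obtains c0 where "\<And>R. R > max 1 ((\<bar>c\<bar> / C') powr (1 / n)) \<Longrightarrow>
    f R = C' powr (1 / n) * R\<^sup>2 * binomial_primitive_series n (1 / n) (c * R powr - n / C') + c0"
proof -
  define R0 where "R0 = max 1 ((\<bar>c\<bar> / C') powr (1 / n))"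
  have small: "\<bar>c / C' * R powr - n\<bar> < 1" if "R > R0" for R
    using abs_mult_powr_neg_less_1[where n = n and C' = C' and R = R and c = c] n C' that
    unfolding R0_def by simp
  define G where "G R = C' powr (1 / n) * (R\<^sup>2 * binomial_primitive_series n (1 / n) (c / C' * R powr - n))" for R
  have G: "(G has_real_derivative R * (c * R powr - n + C') powr (1 / n)) (at R)" if R: "R > R0" for R
  proof -
    have "0 \<le> 1 + c / C' * R powr - n"
      using small[OF R] unfolding abs_less_iff by linarith
    then have "C' powr (1 / n) * (1 + c / C' * R powr - n) powr (1 / n) = (C' * (1 + c / C' * R powr - n)) powr (1 / n)"
      using C' by (simp add: powr_mult)
    also have "C' * (1 + c / C' * R powr - n) = c * R powr - n + C'"
      using C' by (simp add: field_simps)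
    finally have eq: "C' powr (1 / n) * (1 + c / C' * R powr - n) powr (1 / n) = (c * R powr - n + C') powr (1 / n)" .
    have "(G has_real_derivative C' powr (1 / n) * (R * (1 + c / C' * R powr - n) powr (1 / n))) (at R)"
      unfolding G_def[abs_def] using R unfolding R0_def
      by (intro DERIV_cmult has_real_derivative_binomial_primitive[OF n _ small[OF R]]) auto
    also have "C' powr (1 / n) * (R * (1 + c / C' * R powr - n) powr (1 / n)) = R * (c * R powr - n + C') powr (1 / n)"
      using eq by (simp only: mult.left_commute)
    finally show ?thesis .
  qed
  have "(f has_real_derivative R * (c * R powr - n + C') powr (1 / n)) (at R)" if "R > R0" for R
    using f that unfolding R0_def by simp
  then obtain c0 where "\<And>R. R > R0 \<Longrightarrow> f R = G R + c0"
    using same_derivative_imp_diff_const[OF _ G] by blast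
  then show ?thesis
    using that unfolding G_def R0_def by (simp add: mult_ac)
qed

theorem theorem2p1:
  fixes u :: "real^'n \<Rightarrow> real" and C0 :: real
  assumes n3: "CARD('n) \<ge> 3"
    and C2: "C2_on {x. norm x > 1} u"
    and rad: "radial u"
    and eq: "\<forall>x. norm x > 1 \<longrightarrow> (\<exists>lam. eigenvalues_mult (hessian u x) lam \<and>
               (\<forall>i. lam i > 0) \<and>
               (1 / real CARD('n)) * (\<Sum>i\<in>UNIV. ln (lam i)) = C0)"
  shows "let n = real CARD('n); C' = exp (n * C0) in
    \<exists>c c0' c0. c \<ge> - C' \<and>
      (\<forall>x. norm x > 1 \<longrightarrow>
         u x = integral {1..norm x} (\<lambda>t. t * (c * t powr (- n) + C') powr (1 / n)) + c0') \<and>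
      (\<forall>x. norm x > max 1 ((\<bar>c\<bar> / C') powr (1 / n)) \<longrightarrow>
         summable (\<lambda>j. ((1 / n) gchoose (j + 1)) / (2 - n * real (j + 1))
                         * (c * norm x powr (- n) / C') ^ (j + 1)) \<and>
         u x = 1 / 2 * C' powr (1 / n) * (norm x)\<^sup>2 + c0
               + C' powr (1 / n) * (norm x)\<^sup>2 *
                 (\<Sum>j. ((1 / n) gchoose (j + 1)) / (2 - n * real (j + 1))
                         * (c * norm x powr (- n) / C') ^ (j + 1)))"
proof -
  let ?n = "real CARD('n)" and ?C' = "exp (real CARD('n) * C0)"
  have n: "?n \<ge> 3" and C': "?C' > 0"
    using n3 by simp_all
  have n2: "CARD('n) \<ge> 2"
    using n3 by simp
  obtain c f where c: "c \<ge> - ?C'" and u: "\<And>x. norm x > 1 \<Longrightarrow> u x = f (norm x)"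
    and f: "\<And>r. r > 1 \<Longrightarrow> (f has_real_derivative r * (c * r powr - ?n + ?C') powr (1 / ?n)) (at r)"
    by (fact radial_solution_profile[OF n2 C2 rad eq])
  obtain c0' where c0': "\<And>R. R > 1 \<Longrightarrow> f R = integral {1..R} (\<lambda>t. t * (c * t powr - ?n + ?C') powr (1 / ?n)) + c0'"
    using profile_integral_form[OF _ _ c f] C' n by auto
  obtain c0 where c0: "\<And>R. R > max 1 ((\<bar>c\<bar> / ?C') powr (1 / ?n)) \<Longrightarrow>
      f R = ?C' powr (1 / ?n) * R\<^sup>2 * binomial_primitive_series ?n (1 / ?n) (c * R powr - ?n / ?C') + c0"
    using profile_series_form[OF n C' f] by metis
  have z: "\<bar>c * norm x powr - ?n / ?C'\<bar> < 1" if "norm x > max 1 ((\<bar>c\<bar> / ?C') powr (1 / ?n))"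
    for x :: "real^'n"
    using abs_mult_powr_neg_less_1[OF _ C' that] n by simp
  note split = binomial_primitive_series_split_head[OF n z, where a = "1 / ?n",
      unfolded binomial_primitive_coeff_def]
  show ?thesis
    unfolding Let_def
    by (rule exI[of _ c], rule exI[of _ c0'], rule exI[of _ c0])
      (use c u c0' c0 split in \<open>auto simp: algebra_simps\<close>)
qed

end
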